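(* Let $n\geq 5$ and let $P=(Y,X,Z)$ be a path of length two in $AQ_n$ (so $Y\ne Z$ are both adjacent to $X$). Then $|N_{AQ_n}(P)|\geq 6n-17$ and $|N_{AQ_n}(X)\cap N_{AQ_n}(Y)\cap N_{AQ_n}(Z)|\leq 1$. Furthermore, if $Z=\overline{X}_n$, then $|N_{AQ_n}(P)|\geq 6n-15$.
   Context: The $n$-dimensional augmented cube $AQ_n$ has vertex set $\{0,1\}^n$, vertices written as strings $X=x_nx_{n-1}\cdots x_1$. For $1\le i\le n$ let $X_i=x_n\cdots x_{i+1}\bar x_i x_{i-1}\cdots x_1$ (flip bit $i$) and $\overline{X}_i=x_n\cdots x_{i+1}\bar x_i\bar x_{i-1}\cdots\bar x_1$ (flip bits $i,\dots,1$), where $\bar x=1-x$. Two distinct vertices $X,Y$ are adjacent iff $Y=X_i$ for some $1\le i\le n$ or $Y=\overline{X}_i$ for some $2\le i\le n$. $N_{AQ_n}(V)$ is the neighbor set of a vertex $V$; for a subgraph $T$, $N_{AQ_n}(T)=\bigcup_{U\in V(T)}N_{AQ_n}(U)\setminus V(T)$. *)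

theory Defs
  imports Main
begin

text \<open>A vertex X = x_n ... x_1 of AQ_n is a bit function on positions 1..n,
  represented as x :: nat \<Rightarrow> bool (True = 1) with x i = False for i outside 1..n.\<close>

definition AQ_verts :: "nat \<Rightarrow> (nat \<Rightarrow> bool) set" where
  "AQ_verts n = {x. \<forall>i. x i \<longrightarrow> 1 \<le> i \<and> i \<le> n}"

definition flip_bit :: "(nat \<Rightarrow> bool) \<Rightarrow> nat \<Rightarrow> (nat \<Rightarrow> bool)" where
  "flip_bit x i = x(i := \<not> x i)"

definition flip_upto :: "(nat \<Rightarrow> bool) \<Rightarrow> nat \<Rightarrow> (nat \<Rightarrow> bool)" where
  "flip_upto x i = (\<lambda>j. if 1 \<le> j \<and> j \<le> i then \<not> x j else x j)"

definition AQ_adj :: "nat \<Rightarrow> (nat \<Rightarrow> bool) \<Rightarrow> (nat \<Rightarrow> bool) \<Rightarrow> bool" where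
  "AQ_adj n x y \<longleftrightarrow> x \<in> AQ_verts n \<and> y \<in> AQ_verts n \<and> x \<noteq> y \<and>
     ((\<exists>i\<in>{1..n}. y = flip_bit x i) \<or> (\<exists>i\<in>{2..n}. y = flip_upto x i))"

definition AQ_nbr :: "nat \<Rightarrow> (nat \<Rightarrow> bool) \<Rightarrow> (nat \<Rightarrow> bool) set" where
  "AQ_nbr n v = {u. AQ_adj n v u}"

definition AQ_nbr_set :: "nat \<Rightarrow> (nat \<Rightarrow> bool) set \<Rightarrow> (nat \<Rightarrow> bool) set" where
  "AQ_nbr_set n S = (\<Union>u\<in>S. AQ_nbr n u) - S"

end

theory Submission
  imports Defs
begin

text \<open>Writing \<open>\<oplus>\<close> for bitwise xor, \<open>flip_bit X i = X \<oplus> e\<^sub>i\<close> and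
  \<open>flip_upto X i = X \<oplus> u\<^sub>i\<close>, where \<open>e\<^sub>i\<close> is the \<open>i\<close>-th unit vector and \<open>u\<^sub>i\<close> has ones
  exactly in positions \<open>1..i\<close>. So \<open>AQ\<^sub>n\<close> is the Cayley graph of \<open>(\<int>/2)\<^sup>n\<close> for the \<open>2n - 1\<close>
  generators \<open>S = {u\<^sub>1..u\<^sub>n, e\<^sub>2..e\<^sub>n}\<close>, and after translating by \<open>X\<close> the path is \<open>(s, 0, t)\<close>
  with \<open>s \<noteq> t\<close> in \<open>S\<close>. Its neighbourhood is \<open>S \<union> (s \<oplus> S) \<union> (t \<oplus> S)\<close> minus \<open>{s, 0, t}\<close>,
  whose size by inclusion-exclusion is \<open>3(2n - 1) - 3 - |R s| - |R t| - |R (s \<oplus> t)| + |R s \<inter> R t|\<close>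
  with \<open>R v = S \<inter> (v \<oplus> S)\<close>.

  Xor relations among generators are rigid: \<open>a \<oplus> b = c\<close> forces \<open>{a, b, c}\<close> to be a triangle
  \<open>{u\<^sub>k\<^sub>-\<^sub>1, u\<^sub>k, e\<^sub>k}\<close>, and \<open>a \<oplus> b = c \<oplus> d\<close> with distinct terms forces a square
  \<open>{u\<^sub>m\<^sub>-\<^sub>1, e\<^sub>m, e\<^sub>m\<^sub>+\<^sub>1, u\<^sub>m\<^sub>+\<^sub>1}\<close>. Hence \<open>|R v| \<le> 4\<close>, \<open>|R e\<^sub>j| \<le> 2\<close>, \<open>|R u\<^sub>n| \<le> 2\<close> and
  \<open>|R s \<inter> R t| \<le> 1\<close>, and a short case analysis gives
  \<open>|R s| + |R t| + |R (s \<oplus> t)| \<le> 11 + |R s \<inter> R t|\<close>, or \<open>9 + |R s \<inter> R t|\<close> when \<open>t = u\<^sub>n\<close>.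
  The bounds hold for every \<open>n\<close>.\<close>

section \<open>Bitwise xor and the generating vectors\<close>

definition bit_xor :: "(nat \<Rightarrow> bool) \<Rightarrow> (nat \<Rightarrow> bool) \<Rightarrow> (nat \<Rightarrow> bool)" (infixl "\<oplus>" 65) where
  "a \<oplus> b = (\<lambda>j. a j \<noteq> b j)"

lemma bit_xor_apply [simp]: "(a \<oplus> b) j \<longleftrightarrow> a j \<noteq> b j"
  by (simp add: bit_xor_def)

lemma bit_xor_assoc: "a \<oplus> b \<oplus> c = a \<oplus> (b \<oplus> c)"
  and bit_xor_commute: "a \<oplus> b = b \<oplus> a"
  and bit_xor_left_commute: "a \<oplus> (b \<oplus> c) = b \<oplus> (a \<oplus> c)"
  by (auto simp: fun_eq_iff)

lemmas bit_xor_ac = bit_xor_assoc bit_xor_commute bit_xor_left_commute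

lemma bit_xor_cancel_left [simp]: "a \<oplus> (a \<oplus> b) = b" "a \<oplus> (b \<oplus> a) = b"
  and bit_xor_left_eq_iff [simp]: "a \<oplus> b = a \<oplus> c \<longleftrightarrow> b = c"
  and bit_xor_eq_self_iff [simp]:
    "a \<oplus> b = a \<longleftrightarrow> b = (\<lambda>_. False)" "a = a \<oplus> b \<longleftrightarrow> b = (\<lambda>_. False)"
    "a \<oplus> b = b \<longleftrightarrow> a = (\<lambda>_. False)"
  and bit_xor_eq_zero_iff [simp]:
    "a \<oplus> b = (\<lambda>_. False) \<longleftrightarrow> a = b" "(\<lambda>_. False) = a \<oplus> b \<longleftrightarrow> a = b"
  and bit_xor_self [simp]: "a \<oplus> a = (\<lambda>_. False)"
  and bit_xor_zero [simp]: "a \<oplus> (\<lambda>_. False) = a"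
  by (auto simp: fun_eq_iff)

lemma inj_bit_xor: "inj ((\<oplus>) a)"
  by (rule injI) simp

lemma card_bit_xor_image: "card ((\<oplus>) a ` A) = card A"
  by (rule card_image) (meson inj_bit_xor inj_on_subset subset_UNIV)

definition unit_vec :: "nat \<Rightarrow> nat \<Rightarrow> bool" where
  "unit_vec k = (\<lambda>j. j = k)"

definition prefix_vec :: "nat \<Rightarrow> nat \<Rightarrow> bool" where
  "prefix_vec k = (\<lambda>j. 1 \<le> j \<and> j \<le> k)"

lemma flip_bit_eq_bit_xor: "flip_bit x i = x \<oplus> unit_vec i"
  by (auto simp: flip_bit_def unit_vec_def fun_eq_iff)

lemma flip_upto_eq_bit_xor: "flip_upto x i = x \<oplus> prefix_vec i"
  by (auto simp: flip_upto_def prefix_vec_def fun_eq_iff)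

lemma unit_vec_eq_iff [simp]: "unit_vec a = unit_vec b \<longleftrightarrow> a = b"
  by (auto simp: unit_vec_def fun_eq_iff)

lemma prefix_vec_eq_iff [simp]: "prefix_vec a = prefix_vec b \<longleftrightarrow> a = b"
proof
  assume "prefix_vec a = prefix_vec b"
  then show "a = b"
    using fun_cong[of _ _ a] fun_cong[of _ _ b] by (fastforce simp: prefix_vec_def)
qed simp

lemma unit_vec_eq_prefix_vec_iff [simp]: "unit_vec a = prefix_vec b \<longleftrightarrow> a = 1 \<and> b = 1"
proof
  assume h: "unit_vec a = prefix_vec b"
  have "unit_vec a a = prefix_vec b a" "unit_vec a 1 = prefix_vec b 1" "unit_vec a b = prefix_vec b b"
    using h by simp_all
  then show "a = 1 \<and> b = 1"
    by (auto simp: unit_vec_def prefix_vec_def split: if_splits)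
qed (auto simp: unit_vec_def prefix_vec_def fun_eq_iff)

lemma prefix_vec_eq_unit_vec_iff [simp]: "prefix_vec b = unit_vec a \<longleftrightarrow> a = 1 \<and> b = 1"
  by (metis unit_vec_eq_prefix_vec_iff)

lemma unit_vec_neq_zero [simp]: "unit_vec a \<noteq> (\<lambda>_. False)" "(\<lambda>_. False) \<noteq> unit_vec a"
  and prefix_vec_eq_zero_iff [simp]:
    "prefix_vec a = (\<lambda>_. False) \<longleftrightarrow> a = 0" "(\<lambda>_. False) = prefix_vec a \<longleftrightarrow> a = 0"
  by (auto simp: unit_vec_def prefix_vec_def fun_eq_iff)

text \<open>Stated at \<open>Suc 0\<close>, the simp normal form of the numeral \<open>1 :: nat\<close>.\<close>

lemma unit_vec_bit1 [simp]: "unit_vec i (Suc 0) \<longleftrightarrow> i = 1"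
  and prefix_vec_bit1 [simp]: "prefix_vec i (Suc 0) \<longleftrightarrow> 1 \<le> i"
  by (auto simp: unit_vec_def prefix_vec_def)

lemma prefix_vec_xor_prefix_vec:
  "prefix_vec i \<oplus> prefix_vec j = (\<lambda>m. min i j < m \<and> m \<le> max i j)"
  by (auto simp: prefix_vec_def fun_eq_iff)

lemma unit_vec_xor_unit_vec:
  "k \<noteq> l \<Longrightarrow> unit_vec k \<oplus> unit_vec l = (\<lambda>m. m = k \<or> m = l)"
  by (auto simp: unit_vec_def fun_eq_iff)

lemma prefix_xor_prefix_eq_unit_iff:
  "prefix_vec i \<oplus> prefix_vec j = unit_vec k \<longleftrightarrow> max i j = Suc (min i j) \<and> k = max i j"
proof
  assume "prefix_vec i \<oplus> prefix_vec j = unit_vec k"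
  then have h: "(min i j < m \<and> m \<le> max i j) \<longleftrightarrow> m = k" for m
    by (simp add: prefix_vec_xor_prefix_vec unit_vec_def fun_eq_iff)
  show "max i j = Suc (min i j) \<and> k = max i j"
    using h[of "Suc (min i j)"] h[of "max i j"] h[of k] by auto
qed (auto simp: prefix_vec_xor_prefix_vec unit_vec_def fun_eq_iff)

lemma prefix_xor_prefix_eq_prefix_xor_prefix_iff:
  assumes "i \<noteq> j" "k \<noteq> l"
  shows "prefix_vec i \<oplus> prefix_vec j = prefix_vec k \<oplus> prefix_vec l \<longleftrightarrow> {i, j} = {k, l}"
proof
  assume "prefix_vec i \<oplus> prefix_vec j = prefix_vec k \<oplus> prefix_vec l"
  then have h: "(min i j < m \<and> m \<le> max i j) \<longleftrightarrow> (min k l < m \<and> m \<le> max k l)" for m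
    by (simp add: prefix_vec_xor_prefix_vec fun_eq_iff)
  have intervals: "a = c \<and> b = d"
    if "a < b" "c < d" "\<And>m. (a < m \<and> m \<le> b) \<longleftrightarrow> (c < m \<and> m \<le> d)" for a b c d :: nat
    using that(3)[of "Suc a"] that(3)[of "Suc c"] that(3)[of b] that(3)[of d] that(1,2) by auto
  have "min i j = min k l \<and> max i j = max k l"
    by (rule intervals) (use assms h in auto)
  then show "{i, j} = {k, l}"
    by (cases "i \<le> j"; cases "k \<le> l") (auto simp: min_def max_def doubleton_eq_iff)
qed (auto simp: doubleton_eq_iff bit_xor_commute)

lemma prefix_xor_prefix_eq_unit_xor_unit_iff:
  assumes "k \<noteq> l"
  shows "prefix_vec i \<oplus> prefix_vec j = unit_vec k \<oplus> unit_vec l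
    \<longleftrightarrow> max i j = min i j + 2 \<and> {k, l} = {min i j + 1, min i j + 2}"
proof -
  have "(\<lambda>m. a < m \<and> m \<le> b) = (\<lambda>m. m = k \<or> m = l) \<longleftrightarrow> b = a + 2 \<and> {k, l} = {a + 1, a + 2}"
    for a b :: nat
  proof
    assume "(\<lambda>m. a < m \<and> m \<le> b) = (\<lambda>m. m = k \<or> m = l)"
    then have h: "(a < m \<and> m \<le> b) \<longleftrightarrow> m = k \<or> m = l" for m
      by (simp add: fun_eq_iff)
    show "b = a + 2 \<and> {k, l} = {a + 1, a + 2}"
      using h[of "Suc a"] h[of "Suc (Suc a)"] h[of b] h[of k] h[of l] assms
      by (auto simp: doubleton_eq_iff)
  qed (auto simp: doubleton_eq_iff fun_eq_iff)
  then show ?thesis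
    using assms by (simp add: prefix_vec_xor_prefix_vec unit_vec_xor_unit_vec)
qed

lemma unit_xor_unit_eq_unit_xor_unit_iff:
  assumes "k \<noteq> l"
  shows "unit_vec i \<oplus> unit_vec j = unit_vec k \<oplus> unit_vec l \<longleftrightarrow> {i, j} = {k, l}"
proof
  assume "unit_vec i \<oplus> unit_vec j = unit_vec k \<oplus> unit_vec l"
  then have h: "(m = i) \<noteq> (m = j) \<longleftrightarrow> (m = k) \<noteq> (m = l)" for m
    by (simp add: unit_vec_def fun_eq_iff)
  show "{i, j} = {k, l}"
    using h[of i] h[of j] h[of k] h[of l] assms by (auto simp: doubleton_eq_iff)
qed (auto simp: doubleton_eq_iff bit_xor_commute)

lemma unit_xor_unit_neq_unit: "unit_vec i \<oplus> unit_vec j \<noteq> unit_vec k"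
proof
  assume "unit_vec i \<oplus> unit_vec j = unit_vec k"
  then have "(m = i) \<noteq> (m = j) \<longleftrightarrow> m = k" for m
    by (simp add: unit_vec_def fun_eq_iff)
  then show False
    by metis
qed

definition AQ_gens :: "nat \<Rightarrow> (nat \<Rightarrow> bool) set" where
  "AQ_gens n = prefix_vec ` {1..n} \<union> unit_vec ` {2..n}"

lemma zero_notin_AQ_gens [simp]: "(\<lambda>_. False) \<notin> AQ_gens n"
  by (auto simp: AQ_gens_def)

lemma finite_AQ_gens [simp]: "finite (AQ_gens n)"
  by (simp add: AQ_gens_def)

lemma prefix_vec_in_AQ_gens_iff [simp]: "prefix_vec i \<in> AQ_gens n \<longleftrightarrow> 1 \<le> i \<and> i \<le> n"
  by (auto simp: AQ_gens_def image_iff)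

lemma unit_vec_in_AQ_gens_iff [simp]: "unit_vec i \<in> AQ_gens n \<longleftrightarrow> 1 \<le> i \<and> i \<le> n"
  by (cases "i = 1") (auto simp: AQ_gens_def image_iff)

lemma card_AQ_gens: "card (AQ_gens n) = 2 * n - 1"
proof -
  have "card (prefix_vec ` {1..n}) = n" "card (unit_vec ` {2..n}) = n - 1"
    by (simp_all add: card_image inj_on_def)
  moreover have "prefix_vec ` {1..n} \<inter> unit_vec ` {2..n} = {}"
    by auto
  ultimately show ?thesis
    unfolding AQ_gens_def by (simp add: card_Un_disjoint)
qed

lemma AQ_gens_prefix_vec: "x \<in> AQ_gens n \<Longrightarrow> x 1 \<Longrightarrow> \<exists>i\<in>{1..n}. x = prefix_vec i"
  and AQ_gens_unit_vec: "x \<in> AQ_gens n \<Longrightarrow> \<not> x 1 \<Longrightarrow> \<exists>i\<in>{2..n}. x = unit_vec i"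
  by (auto simp: AQ_gens_def)

section \<open>Triangles and squares of generators\<close>

definition gen_triangle :: "nat \<Rightarrow> (nat \<Rightarrow> bool) set" where
  "gen_triangle k = {prefix_vec (k - 1), prefix_vec k, unit_vec k}"

lemma prefix_xor_prefix_eq_unit_triangle:
  "prefix_vec i \<oplus> prefix_vec j = unit_vec k \<Longrightarrow> {prefix_vec i, prefix_vec j} \<subseteq> gen_triangle k"
  by (auto simp: prefix_xor_prefix_eq_unit_iff gen_triangle_def min_def max_def split: if_splits)

lemma AQ_gens_xor_closed_triangle:
  assumes a: "a \<in> AQ_gens n" and b: "b \<in> AQ_gens n" and ab: "a \<oplus> b \<in> AQ_gens n"
  shows "\<exists>k\<in>{2..n}. {a, b, a \<oplus> b} \<subseteq> gen_triangle k"
proof -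
  have prefix_case: "\<exists>k\<in>{2..n}. {a, b, a \<oplus> b} \<subseteq> gen_triangle k"
    if a: "a \<in> AQ_gens n" and b: "b \<in> AQ_gens n" and ab: "a \<oplus> b \<in> AQ_gens n" and "a 1" for a b
  proof (cases "b 1")
    case True
    then obtain i j k where "a = prefix_vec i" "b = prefix_vec j" "a \<oplus> b = unit_vec k" "k \<in> {2..n}"
      using a b ab \<open>a 1\<close> AQ_gens_prefix_vec AQ_gens_unit_vec[of "a \<oplus> b"] by (metis bit_xor_apply)
    then show ?thesis
      using prefix_xor_prefix_eq_unit_triangle[of i j k] by (auto simp: gen_triangle_def)
  next
    case False
    then obtain i j k where "a = prefix_vec i" "a \<oplus> b = prefix_vec j" "b = unit_vec k" "k \<in> {2..n}"
      using a b ab \<open>a 1\<close> AQ_gens_prefix_vec[of a] AQ_gens_prefix_vec[of "a \<oplus> b"] AQ_gens_unit_vec[of b]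
      by (metis bit_xor_apply)
    moreover from this have "prefix_vec i \<oplus> prefix_vec j = unit_vec k"
      by (metis bit_xor_cancel_left)
    ultimately show ?thesis
      using prefix_xor_prefix_eq_unit_triangle[of i j k] by (auto simp: gen_triangle_def)
  qed
  show ?thesis
  proof (cases "a 1 \<or> b 1")
    case True
    then show ?thesis
      using prefix_case[OF a b ab] prefix_case[OF b a] ab
      by (auto simp: bit_xor_commute[of b a] insert_commute)
  next
    case False
    then obtain i j k where "a = unit_vec i" "b = unit_vec j" "a \<oplus> b = unit_vec k"
      using a b ab AQ_gens_unit_vec[of a] AQ_gens_unit_vec[of b] AQ_gens_unit_vec[of "a \<oplus> b"]
      by (metis bit_xor_apply)
    then show ?thesis
      using unit_xor_unit_neq_unit by metis
  qed
qed

definition gen_square :: "nat \<Rightarrow> (nat \<Rightarrow> bool) set" where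
  "gen_square m = {prefix_vec (m - 1), unit_vec m, unit_vec (m + 1), prefix_vec (m + 1)}"

lemma prefix_xor_prefix_eq_unit_xor_unit_square:
  assumes "prefix_vec i \<oplus> prefix_vec j = unit_vec k \<oplus> unit_vec l" "k \<noteq> l"
  shows "{prefix_vec i, prefix_vec j, unit_vec k, unit_vec l} = gen_square (Suc (min i j))"
proof -
  have "max i j = min i j + 2" "{k, l} = {min i j + 1, min i j + 2}"
    using assms by (simp_all add: prefix_xor_prefix_eq_unit_xor_unit_iff)
  then show ?thesis
    by (cases "i \<le> j") (auto simp: gen_square_def min_def max_def doubleton_eq_iff)
qed

lemma AQ_gens_square:
  assumes gens: "a \<in> AQ_gens n" "b \<in> AQ_gens n" "c \<in> AQ_gens n" "d \<in> AQ_gens n"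
    and distinct: "distinct [a, b, c, d]" and sum: "a \<oplus> b = c \<oplus> d"
  shows "\<exists>m\<ge>2. {a, b, c, d} = gen_square m"
proof -
  have mixed: "\<exists>m\<ge>2. {p, q, r, s} = gen_square m"
    if "p \<in> AQ_gens n" "q \<in> AQ_gens n" "r \<in> AQ_gens n" "s \<in> AQ_gens n"
      "p 1" "q 1" "\<not> r 1" "\<not> s 1" "r \<noteq> s" "p \<oplus> q = r \<oplus> s" for p q r s
  proof -
    note pqrs = that
    obtain i j k l where "p = prefix_vec i" "q = prefix_vec j" "r = unit_vec k" "s = unit_vec l"
      "1 \<le> i" "1 \<le> j"
      using AQ_gens_prefix_vec[OF pqrs(1,5)] AQ_gens_prefix_vec[OF pqrs(2,6)]
        AQ_gens_unit_vec[OF pqrs(3,7)] AQ_gens_unit_vec[OF pqrs(4,8)] by auto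
    then show ?thesis
      using prefix_xor_prefix_eq_unit_xor_unit_square[of i j k l] pqrs
      by (intro exI[of _ "Suc (min i j)"]) simp
  qed
  have split: "\<exists>m\<ge>2. {p, q, r, s} = gen_square m"
    if "p \<in> AQ_gens n" "q \<in> AQ_gens n" "r \<in> AQ_gens n" "s \<in> AQ_gens n"
      "p 1 = q 1" "r 1 = s 1" "p 1 \<noteq> r 1" "p \<noteq> q" "r \<noteq> s" "p \<oplus> q = r \<oplus> s" for p q r s
  proof (cases "p 1")
    case True
    then show ?thesis
      using mixed[of p q r s] that by simp
  next
    case False
    then show ?thesis
      using mixed[of r s p q] that by (simp add: insert_commute)
  qed
  have not_uniform: "\<not> (a 1 = b 1 \<and> a 1 = c 1 \<and> a 1 = d 1)"
  proof
    assume same: "a 1 = b 1 \<and> a 1 = c 1 \<and> a 1 = d 1"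
    show False
    proof (cases "a 1")
      case True
      then obtain i j k l where "a = prefix_vec i" "b = prefix_vec j" "c = prefix_vec k" "d = prefix_vec l"
        using True same AQ_gens_prefix_vec[OF gens(1)] AQ_gens_prefix_vec[OF gens(2)]
          AQ_gens_prefix_vec[OF gens(3)] AQ_gens_prefix_vec[OF gens(4)] by auto
      then show False
        using sum distinct prefix_xor_prefix_eq_prefix_xor_prefix_iff[of i j k l]
        by (auto simp: doubleton_eq_iff)
    next
      case False
      then obtain i j k l where "a = unit_vec i" "b = unit_vec j" "c = unit_vec k" "d = unit_vec l"
        using False same AQ_gens_unit_vec[OF gens(1)] AQ_gens_unit_vec[OF gens(2)]
          AQ_gens_unit_vec[OF gens(3)] AQ_gens_unit_vec[OF gens(4)] by auto
      then show False
        using sum distinct unit_xor_unit_eq_unit_xor_unit_iff[of k l i j]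
        by (auto simp: doubleton_eq_iff)
    qed
  qed
  have parity: "(a 1 \<noteq> b 1) \<longleftrightarrow> (c 1 \<noteq> d 1)"
    using fun_cong[OF sum, of 1] by simp
  have sums: "a \<oplus> c = b \<oplus> d" "a \<oplus> d = b \<oplus> c"
    using sum by (auto simp: fun_eq_iff)
  consider "a 1 = b 1" "c 1 = d 1" "a 1 \<noteq> c 1" | "a 1 = c 1" "b 1 = d 1" "a 1 \<noteq> b 1"
    | "a 1 = d 1" "b 1 = c 1" "a 1 \<noteq> b 1"
    using parity not_uniform by blast
  then show ?thesis
  proof cases
    case 1
    then show ?thesis
      using split[of a b c d] gens distinct sum by simp
  next
    case 2
    then show ?thesis
      using split[of a c b d] gens distinct sums by (simp add: insert_commute)
  next
    case 3
    then show ?thesis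
      using split[of a d b c] gens distinct sums by (simp add: insert_commute)
  qed
qed

section \<open>Common neighbours of generators\<close>

text \<open>This is \<open>R v\<close> above: the common neighbours of \<open>0\<close> and \<open>v\<close> in the Cayley graph.\<close>

definition gen_overlap :: "nat \<Rightarrow> (nat \<Rightarrow> bool) \<Rightarrow> (nat \<Rightarrow> bool) set" where
  "gen_overlap n v = AQ_gens n \<inter> (\<oplus>) v ` AQ_gens n"

lemma mem_gen_overlap_iff: "w \<in> gen_overlap n v \<longleftrightarrow> w \<in> AQ_gens n \<and> v \<oplus> w \<in> AQ_gens n"
  unfolding gen_overlap_def by (auto intro: image_eqI[of w _ "v \<oplus> w"])

lemma self_notin_gen_overlap: "v \<notin> gen_overlap n v"
  by (simp add: mem_gen_overlap_iff)

lemma finite_gen_overlap [simp]: "finite (gen_overlap n v)"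
  by (simp add: gen_overlap_def)

lemma gen_overlap_subset_AQ_gens: "gen_overlap n v \<subseteq> AQ_gens n"
  by (simp add: gen_overlap_def)

lemma gen_overlap_prefix_vec_subset:
  assumes "1 \<le> j" "j \<le> n"
  shows "gen_overlap n (prefix_vec j) \<subseteq> {prefix_vec (j - 1), unit_vec j, prefix_vec (j + 1), unit_vec (j + 1)}"
proof
  fix w
  assume w: "w \<in> gen_overlap n (prefix_vec j)"
  then obtain k where "2 \<le> k" "{prefix_vec j, w} \<subseteq> gen_triangle k"
    using AQ_gens_xor_closed_triangle[of "prefix_vec j" n w] assms
    by (auto simp: mem_gen_overlap_iff)
  moreover have "w \<noteq> prefix_vec j"
    using w self_notin_gen_overlap by blast
  ultimately show "w \<in> {prefix_vec (j - 1), unit_vec j, prefix_vec (j + 1), unit_vec (j + 1)}"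
    by (auto simp: gen_triangle_def)
qed

lemma gen_overlap_unit_vec_subset:
  assumes "2 \<le> j" "j \<le> n"
  shows "gen_overlap n (unit_vec j) \<subseteq> {prefix_vec (j - 1), prefix_vec j}"
proof
  fix w
  assume w: "w \<in> gen_overlap n (unit_vec j)"
  then obtain k where "2 \<le> k" "{unit_vec j, w} \<subseteq> gen_triangle k"
    using AQ_gens_xor_closed_triangle[of "unit_vec j" n w] assms
    by (auto simp: mem_gen_overlap_iff)
  moreover have "w \<noteq> unit_vec j"
    using w self_notin_gen_overlap by blast
  ultimately show "w \<in> {prefix_vec (j - 1), prefix_vec j}"
    using assms by (auto simp: gen_triangle_def)
qed

lemma card_le_length_if_subset: "A \<subseteq> set xs \<Longrightarrow> card A \<le> length xs"
  by (meson List.finite_set card_length card_mono order_trans)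

lemma card_gen_overlap_unit_vec_le:
  assumes "2 \<le> j" "j \<le> n"
  shows "card (gen_overlap n (unit_vec j)) \<le> 2"
proof -
  have "card (gen_overlap n (unit_vec j)) \<le> length [prefix_vec (j - 1), prefix_vec j]"
    by (rule card_le_length_if_subset) (use gen_overlap_unit_vec_subset[OF assms] in simp)
  then show ?thesis
    by simp
qed

lemma card_gen_overlap_le:
  assumes "v \<in> AQ_gens n"
  shows "card (gen_overlap n v) \<le> 4"
proof (cases "v 1")
  case True
  then obtain j where j: "1 \<le> j" "j \<le> n" "v = prefix_vec j"
    using AQ_gens_prefix_vec[OF assms] by auto
  have "card (gen_overlap n (prefix_vec j))
      \<le> length [prefix_vec (j - 1), unit_vec j, prefix_vec (j + 1), unit_vec (j + 1)]"
    by (rule card_le_length_if_subset) (use gen_overlap_prefix_vec_subset[OF j(1,2)] in simp)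
  then show ?thesis
    using j by simp
next
  case False
  then obtain j where "2 \<le> j" "j \<le> n" "v = unit_vec j"
    using AQ_gens_unit_vec[OF assms] by auto
  then show ?thesis
    using card_gen_overlap_unit_vec_le[of j n] by simp
qed

lemma card_gen_overlap_top_le:
  assumes "1 \<le> n"
  shows "card (gen_overlap n (prefix_vec n)) \<le> 2"
proof -
  have "gen_overlap n (prefix_vec n)
      \<subseteq> {prefix_vec (n - 1), unit_vec n, prefix_vec (n + 1), unit_vec (n + 1)} \<inter> AQ_gens n"
    using gen_overlap_prefix_vec_subset[OF assms order_refl] gen_overlap_subset_AQ_gens by blast
  also have "\<dots> \<subseteq> set [prefix_vec (n - 1), unit_vec n]"
    by auto
  finally have "card (gen_overlap n (prefix_vec n)) \<le> length [prefix_vec (n - 1), unit_vec n]"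
    by (rule card_le_length_if_subset)
  then show ?thesis
    by simp
qed

lemma gen_overlap_xor_cases:
  assumes s: "s \<in> AQ_gens n" and t: "t \<in> AQ_gens n" and "s \<noteq> t"
    and w: "w \<in> gen_overlap n (s \<oplus> t)"
  shows "w \<in> {s, t} \<or> (\<exists>m\<ge>2. {s, t, w} \<subseteq> gen_square m)"
proof (cases "w \<in> {s, t}")
  case False
  define c where "c = s \<oplus> t \<oplus> w"
  have gens: "w \<in> AQ_gens n" "c \<in> AQ_gens n"
    using w by (simp_all add: mem_gen_overlap_iff c_def)
  have "c = s \<oplus> (t \<oplus> w)" "c = t \<oplus> (s \<oplus> w)" "c = w \<oplus> (s \<oplus> t)"
    by (simp_all add: c_def bit_xor_ac)
  then have "distinct [s, t, w, c]"
    using False \<open>s \<noteq> t\<close> by auto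
  moreover have "s \<oplus> t = w \<oplus> c"
    by (simp add: c_def bit_xor_commute)
  ultimately obtain m where "m \<ge> 2" "{s, t, w, c} = gen_square m"
    using AQ_gens_square[OF s t gens] by blast
  then show ?thesis
    by auto
qed simp

lemma gen_square_unique:
  "s \<noteq> t \<Longrightarrow> {s, t} \<subseteq> gen_square m \<Longrightarrow> {s, t} \<subseteq> gen_square m' \<Longrightarrow> 2 \<le> m \<Longrightarrow> 2 \<le> m' \<Longrightarrow> m = m'"
  by (auto simp: gen_square_def)

lemma card_gen_overlap_xor_le:
  assumes s: "s \<in> AQ_gens n" and t: "t \<in> AQ_gens n" and st: "s \<noteq> t"
  shows "card (gen_overlap n (s \<oplus> t)) \<le> (if \<exists>m\<ge>2. {s, t} \<subseteq> gen_square m then 4 else 2)"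
proof (cases "\<exists>m\<ge>2. {s, t} \<subseteq> gen_square m")
  case True
  then obtain m where m: "2 \<le> m" "{s, t} \<subseteq> gen_square m"
    by blast
  have "gen_overlap n (s \<oplus> t) \<subseteq> gen_square m"
  proof
    fix w
    assume "w \<in> gen_overlap n (s \<oplus> t)"
    from gen_overlap_xor_cases[OF s t st this] show "w \<in> gen_square m"
    proof
      assume "\<exists>m'\<ge>2. {s, t, w} \<subseteq> gen_square m'"
      then obtain m' where "2 \<le> m'" "{s, t, w} \<subseteq> gen_square m'"
        by blast
      moreover from this have "m' = m"
        using gen_square_unique[OF st _ m(2) _ m(1)] by blast
      ultimately show "w \<in> gen_square m"
        by blast
    qed (use m in blast)
  qed
  also have "\<dots> = set [prefix_vec (m - 1), unit_vec m, unit_vec (m + 1), prefix_vec (m + 1)]"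
    by (simp add: gen_square_def)
  finally have "card (gen_overlap n (s \<oplus> t)) \<le> length [prefix_vec (m - 1), unit_vec m, unit_vec (m + 1), prefix_vec (m + 1)]"
    by (rule card_le_length_if_subset)
  then show ?thesis
    using True by simp
next
  case False
  then have "gen_overlap n (s \<oplus> t) \<subseteq> set [s, t]"
    using gen_overlap_xor_cases[OF s t st] by auto
  then have "card (gen_overlap n (s \<oplus> t)) \<le> length [s, t]"
    by (rule card_le_length_if_subset)
  then show ?thesis
    using False by simp
qed

lemma card_gen_overlap_Int_le:
  assumes s: "s \<in> AQ_gens n" and t: "t \<in> AQ_gens n" and st: "s \<noteq> t"
  shows "card (gen_overlap n s \<inter> gen_overlap n t) \<le> 1"
proof -
  have gens: "x \<in> AQ_gens n" "x \<noteq> v" if "x \<in> gen_overlap n v" for x v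
    using that gen_overlap_subset_AQ_gens self_notin_gen_overlap by blast+
  have prefix_prefix: "x = y"
    if "1 \<le> i" "i \<le> n" "1 \<le> j" "j \<le> n" "i \<noteq> j"
      "x \<in> gen_overlap n (prefix_vec i) \<inter> gen_overlap n (prefix_vec j)"
      "y \<in> gen_overlap n (prefix_vec i) \<inter> gen_overlap n (prefix_vec j)" for i j x y
  proof -
    have "x \<in> {prefix_vec (i - 1), unit_vec i, prefix_vec (i + 1), unit_vec (i + 1)}"
      "x \<in> {prefix_vec (j - 1), unit_vec j, prefix_vec (j + 1), unit_vec (j + 1)}"
      "y \<in> {prefix_vec (i - 1), unit_vec i, prefix_vec (i + 1), unit_vec (i + 1)}"
      "y \<in> {prefix_vec (j - 1), unit_vec j, prefix_vec (j + 1), unit_vec (j + 1)}"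
      using that gen_overlap_prefix_vec_subset[of i n] gen_overlap_prefix_vec_subset[of j n] by blast+
    moreover have "x \<in> AQ_gens n" "y \<in> AQ_gens n" "x \<noteq> prefix_vec i" "y \<noteq> prefix_vec i"
      "x \<noteq> prefix_vec j" "y \<noteq> prefix_vec j"
      using that gens by blast+
    ultimately show ?thesis
      using that(1-5) by auto
  qed
  have prefix_unit: "x = y"
    if "1 \<le> i" "i \<le> n" "2 \<le> j" "j \<le> n"
      "x \<in> gen_overlap n (prefix_vec i) \<inter> gen_overlap n (unit_vec j)"
      "y \<in> gen_overlap n (prefix_vec i) \<inter> gen_overlap n (unit_vec j)" for i j x y
  proof -
    have "x \<in> {prefix_vec (i - 1), unit_vec i, prefix_vec (i + 1), unit_vec (i + 1)}"
      "x \<in> {prefix_vec (j - 1), prefix_vec j}"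
      "y \<in> {prefix_vec (i - 1), unit_vec i, prefix_vec (i + 1), unit_vec (i + 1)}"
      "y \<in> {prefix_vec (j - 1), prefix_vec j}"
      using that gen_overlap_prefix_vec_subset[of i n] gen_overlap_unit_vec_subset[of j n] by blast+
    moreover have "x \<in> AQ_gens n" "y \<in> AQ_gens n" "x \<noteq> prefix_vec i" "y \<noteq> prefix_vec i"
      using that gens by blast+
    ultimately show ?thesis
      using that(1-4) by auto
  qed
  have unit_unit: "x = y"
    if "2 \<le> i" "i \<le> n" "2 \<le> j" "j \<le> n" "i \<noteq> j"
      "x \<in> gen_overlap n (unit_vec i) \<inter> gen_overlap n (unit_vec j)"
      "y \<in> gen_overlap n (unit_vec i) \<inter> gen_overlap n (unit_vec j)" for i j x y
  proof -
    have "x \<in> {prefix_vec (i - 1), prefix_vec i}" "x \<in> {prefix_vec (j - 1), prefix_vec j}"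
      "y \<in> {prefix_vec (i - 1), prefix_vec i}" "y \<in> {prefix_vec (j - 1), prefix_vec j}"
      using that gen_overlap_unit_vec_subset[of i n] gen_overlap_unit_vec_subset[of j n] by blast+
    then show ?thesis
      using that(1-5) by auto
  qed
  have "x = y" if "x \<in> gen_overlap n s \<inter> gen_overlap n t" "y \<in> gen_overlap n s \<inter> gen_overlap n t" for x y
  proof (cases "s 1"; cases "t 1")
    assume "s 1" "t 1"
    then obtain i j where "1 \<le> i" "i \<le> n" "s = prefix_vec i" "1 \<le> j" "j \<le> n" "t = prefix_vec j"
      using AQ_gens_prefix_vec[OF s] AQ_gens_prefix_vec[OF t] by auto
    then show ?thesis
      using prefix_prefix[of i j x y] that st by blast
  next
    assume "s 1" "\<not> t 1"
    then obtain i j where "1 \<le> i" "i \<le> n" "s = prefix_vec i" "2 \<le> j" "j \<le> n" "t = unit_vec j"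
      using AQ_gens_prefix_vec[OF s] AQ_gens_unit_vec[OF t] by auto
    then show ?thesis
      using prefix_unit[of i j x y] that by blast
  next
    assume "\<not> s 1" "t 1"
    then obtain i j where "2 \<le> i" "i \<le> n" "s = unit_vec i" "1 \<le> j" "j \<le> n" "t = prefix_vec j"
      using AQ_gens_unit_vec[OF s] AQ_gens_prefix_vec[OF t] by auto
    then show ?thesis
      using prefix_unit[of j i x y] that by blast
  next
    assume "\<not> s 1" "\<not> t 1"
    then obtain i j where "2 \<le> i" "i \<le> n" "s = unit_vec i" "2 \<le> j" "j \<le> n" "t = unit_vec j"
      using AQ_gens_unit_vec[OF s] AQ_gens_unit_vec[OF t] by auto
    then show ?thesis
      using unit_unit[of i j x y] that st by blast
  qed
  then show ?thesis
    by (simp add: card_le_Suc0_iff_eq)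
qed

lemma prefix_vec_common_gen_overlap:
  assumes "2 \<le> m" "m + 1 \<le> n"
  shows "prefix_vec m \<in> gen_overlap n (prefix_vec (m - 1)) \<inter> gen_overlap n (prefix_vec (m + 1))"
proof -
  have "prefix_vec (m - 1) \<oplus> prefix_vec m = unit_vec m" "prefix_vec (m + 1) \<oplus> prefix_vec m = unit_vec (m + 1)"
    using assms by (simp_all add: prefix_xor_prefix_eq_unit_iff)
  then show ?thesis
    using assms by (simp add: mem_gen_overlap_iff)
qed

lemma card_gen_overlap_sum_le:
  assumes s: "s \<in> AQ_gens n" and t: "t \<in> AQ_gens n" and st: "s \<noteq> t"
  shows "card (gen_overlap n s) + card (gen_overlap n t) + card (gen_overlap n (s \<oplus> t))
    \<le> (if t = prefix_vec n then 9 else 11) + card (gen_overlap n s \<inter> gen_overlap n t)"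
proof -
  have rs: "card (gen_overlap n s) \<le> 4" and rt: "card (gen_overlap n t) \<le> 4"
    using card_gen_overlap_le s t by blast+
  have top: "card (gen_overlap n t) \<le> 2" if "t = prefix_vec n"
    using card_gen_overlap_top_le t that by auto
  have common: "card (gen_overlap n s \<inter> gen_overlap n t) \<ge> 1"
    if "x \<in> gen_overlap n s \<inter> gen_overlap n t" for x
    using that card_0_eq[of "gen_overlap n s \<inter> gen_overlap n t"] by fastforce
  show ?thesis
  proof (cases "s \<oplus> t \<in> AQ_gens n")
    case True
    then obtain k where k: "k \<in> {2..n}" "{s, t, s \<oplus> t} \<subseteq> gen_triangle k"
      using AQ_gens_xor_closed_triangle[OF s t] by blast
    have "s \<oplus> t \<noteq> s" "s \<oplus> t \<noteq> t"
      using s t by auto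
    then have "unit_vec k \<in> {s, t, s \<oplus> t}"
      using k(2) st by (auto simp: gen_triangle_def)
    then have "card (gen_overlap n s) + card (gen_overlap n t) + card (gen_overlap n (s \<oplus> t)) \<le> 10"
      using card_gen_overlap_unit_vec_le[of k n] k(1) rs rt card_gen_overlap_le[OF True] by auto
    moreover have "s \<oplus> t \<in> gen_overlap n s \<inter> gen_overlap n t"
      using True s t by (simp add: mem_gen_overlap_iff bit_xor_commute)
    ultimately show ?thesis
      using common by fastforce
  next
    case False
    have q: "card (gen_overlap n (s \<oplus> t)) \<le> 4"
      using card_gen_overlap_xor_le[OF s t st] by (simp split: if_splits)
    consider "\<not> s 1" | "\<not> t 1" | "s 1" "t 1"
      by blast
    then show ?thesis
    proof cases
      case 1
      then obtain j where "2 \<le> j" "j \<le> n" "s = unit_vec j"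
        using AQ_gens_unit_vec[OF s] by auto
      then show ?thesis
        using card_gen_overlap_unit_vec_le[of j n] rt top q by auto
    next
      case 2
      then obtain j where "2 \<le> j" "j \<le> n" "t = unit_vec j"
        using AQ_gens_unit_vec[OF t] by auto
      then show ?thesis
        using card_gen_overlap_unit_vec_le[of j n] rs q by auto
    next
      case 3
      show ?thesis
      proof (cases "\<exists>m\<ge>2. {s, t} \<subseteq> gen_square m")
        case True
        then obtain m where m: "2 \<le> m" "{s, t} \<subseteq> gen_square m"
          by blast
        then have "{s, t} = {prefix_vec (m - 1), prefix_vec (m + 1)}"
          using 3 st by (auto simp: gen_square_def)
        then have "prefix_vec m \<in> gen_overlap n s \<inter> gen_overlap n t"
          using prefix_vec_common_gen_overlap[of m n] m(1) s t by (auto simp: doubleton_eq_iff)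
        then show ?thesis
          using common rs rt top q by fastforce
      next
        case False
        have "card (gen_overlap n (s \<oplus> t)) \<le> 2"
          using card_gen_overlap_xor_le[OF s t st] unfolding if_not_P[OF False] .
        then show ?thesis
          using rs rt top by auto
      qed
    qed
  qed
qed

section \<open>The neighbourhood of a path\<close>

lemma card_Un3_Int:
  assumes "finite A" "finite B" "finite C"
  shows "card (A \<union> B \<union> C) + card (A \<inter> B) + card (A \<inter> C) + card (B \<inter> C)
    = card A + card B + card C + card (A \<inter> B \<inter> C)"
proof -
  have AB: "card A + card B = card (A \<union> B) + card (A \<inter> B)"
    using assms by (intro card_Un_Int)
  have ABC: "card (A \<union> B) + card C = card (A \<union> B \<union> C) + card ((A \<union> B) \<inter> C)"
    using assms by (intro card_Un_Int) auto
  have "card (A \<inter> C) + card (B \<inter> C) = card ((A \<inter> C) \<union> (B \<inter> C)) + card ((A \<inter> C) \<inter> (B \<inter> C))"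
    using assms by (intro card_Un_Int) auto
  also have "(A \<inter> C) \<union> (B \<inter> C) = (A \<union> B) \<inter> C"
    by blast
  also have "(A \<inter> C) \<inter> (B \<inter> C) = A \<inter> B \<inter> C"
    by blast
  finally show ?thesis
    using AB ABC by linarith
qed

lemma bit_xor_image_Int_bit_xor_image:
  "(\<oplus>) s ` A \<inter> (\<oplus>) t ` A = (\<oplus>) s ` (A \<inter> (\<oplus>) (s \<oplus> t) ` A)"
proof -
  have "(\<oplus>) t ` A = (\<oplus>) s ` ((\<oplus>) (s \<oplus> t) ` A)"
    by (simp add: image_image bit_xor_assoc)
  then show ?thesis
    by (simp add: image_Int[OF inj_bit_xor])
qed

lemma card_AQ_gens_translates_Un:
  "card (AQ_gens n \<union> (\<oplus>) s ` AQ_gens n \<union> (\<oplus>) t ` AQ_gens n)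
      + card (gen_overlap n s) + card (gen_overlap n t) + card (gen_overlap n (s \<oplus> t))
    = 3 * (2 * n - 1) + card (gen_overlap n s \<inter> gen_overlap n t)"
proof -
  have "card ((\<oplus>) s ` AQ_gens n \<inter> (\<oplus>) t ` AQ_gens n) = card (gen_overlap n (s \<oplus> t))"
    by (simp add: bit_xor_image_Int_bit_xor_image gen_overlap_def card_bit_xor_image)
  moreover have "AQ_gens n \<inter> (\<oplus>) s ` AQ_gens n \<inter> (\<oplus>) t ` AQ_gens n
      = gen_overlap n s \<inter> gen_overlap n t"
    by (auto simp: gen_overlap_def)
  ultimately show ?thesis
    using card_Un3_Int[of "AQ_gens n" "(\<oplus>) s ` AQ_gens n" "(\<oplus>) t ` AQ_gens n"]
    by (simp add: gen_overlap_def[symmetric] card_bit_xor_image card_AQ_gens)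
qed

lemma card_gen_path_nbhd_ge:
  assumes s: "s \<in> AQ_gens n" and t: "t \<in> AQ_gens n" and st: "s \<noteq> t"
  shows "6 * n \<le> card ((AQ_gens n \<union> (\<oplus>) s ` AQ_gens n \<union> (\<oplus>) t ` AQ_gens n) - {s, \<lambda>_. False, t})
    + (if t = prefix_vec n then 15 else 17)"
proof -
  let ?U = "AQ_gens n \<union> (\<oplus>) s ` AQ_gens n \<union> (\<oplus>) t ` AQ_gens n"
  have "{s, \<lambda>_. False, t} \<subseteq> ?U"
    using s t by (auto intro: image_eqI[of _ _ s])
  moreover have "s \<noteq> (\<lambda>_. False)" "t \<noteq> (\<lambda>_. False)"
    using s t zero_notin_AQ_gens by metis+
  then have "card {s, \<lambda>_. False, t} = 3"
    using st by simp
  ultimately have "card (?U - {s, \<lambda>_. False, t}) = card ?U - 3"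
    by (simp add: card_Diff_subset)
  moreover have "3 * (2 * n - 1) = 6 * n - 3" "n \<ge> 1"
    using s by (auto simp: AQ_gens_def)
  ultimately show ?thesis
    using card_AQ_gens_translates_Un[of n s t] card_gen_overlap_sum_le[OF s t st]
    by (cases "t = prefix_vec n") simp_all
qed

lemma AQ_nbr_eq_bit_xor_image:
  assumes X: "X \<in> AQ_verts n"
  shows "AQ_nbr n X = (\<oplus>) X ` AQ_gens n"
proof -
  have adj: "AQ_adj n X (X \<oplus> w) \<longleftrightarrow> w \<in> AQ_gens n" for w
  proof
    assume "AQ_adj n X (X \<oplus> w)"
    then have "(\<exists>i\<in>{1..n}. w = unit_vec i) \<or> (\<exists>i\<in>{2..n}. w = prefix_vec i)"
      by (auto simp: AQ_adj_def flip_bit_eq_bit_xor flip_upto_eq_bit_xor)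
    then show "w \<in> AQ_gens n"
      by auto
  next
    assume w: "w \<in> AQ_gens n"
    then have "X \<oplus> w \<in> AQ_verts n"
      using X by (auto simp: AQ_verts_def AQ_gens_def prefix_vec_def unit_vec_def)
    moreover have "(\<exists>i\<in>{1..n}. w = unit_vec i) \<or> (\<exists>i\<in>{2..n}. w = prefix_vec i)"
      using w by (auto simp: AQ_gens_def intro: bexI[of _ 1])
    ultimately show "AQ_adj n X (X \<oplus> w)"
      using X w by (auto simp: AQ_adj_def flip_bit_eq_bit_xor flip_upto_eq_bit_xor)
  qed
  show ?thesis
  proof (intro set_eqI iffI)
    fix x
    assume "x \<in> AQ_nbr n X"
    then have "X \<oplus> x \<in> AQ_gens n"
      using adj[of "X \<oplus> x"] by (simp add: AQ_nbr_def)
    then show "x \<in> (\<oplus>) X ` AQ_gens n"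
      by (rule image_eqI[rotated]) simp
  qed (use adj in \<open>auto simp: AQ_nbr_def\<close>)
qed

lemma AQ_nbr_bit_xor:
  assumes "X \<oplus> v \<in> AQ_verts n"
  shows "AQ_nbr n (X \<oplus> v) = (\<oplus>) X ` ((\<oplus>) v ` AQ_gens n)"
  using AQ_nbr_eq_bit_xor_image[OF assms] by (simp add: image_image bit_xor_assoc)

lemma AQ_path_nbhd_eq:
  assumes "X \<in> AQ_verts n" "X \<oplus> s \<in> AQ_verts n" "X \<oplus> t \<in> AQ_verts n"
  shows "AQ_nbr_set n {X \<oplus> s, X, X \<oplus> t}
    = (\<oplus>) X ` ((AQ_gens n \<union> (\<oplus>) s ` AQ_gens n \<union> (\<oplus>) t ` AQ_gens n) - {s, \<lambda>_. False, t})"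
proof -
  have "{X \<oplus> s, X, X \<oplus> t} = (\<oplus>) X ` {s, \<lambda>_. False, t}"
    by (simp add: fun_eq_iff)
  then show ?thesis
    by (simp add: AQ_nbr_set_def AQ_nbr_eq_bit_xor_image[OF assms(1)] AQ_nbr_bit_xor[OF assms(2)]
        AQ_nbr_bit_xor[OF assms(3)] image_Un Un_ac image_set_diff[OF inj_bit_xor])
qed

lemma AQ_path_common_nbrs_eq:
  assumes "X \<in> AQ_verts n" "X \<oplus> s \<in> AQ_verts n" "X \<oplus> t \<in> AQ_verts n"
  shows "AQ_nbr n X \<inter> AQ_nbr n (X \<oplus> s) \<inter> AQ_nbr n (X \<oplus> t)
    = (\<oplus>) X ` (gen_overlap n s \<inter> gen_overlap n t)"
  by (simp add: AQ_nbr_eq_bit_xor_image[OF assms(1)] AQ_nbr_bit_xor[OF assms(2)] AQ_nbr_bit_xor[OF assms(3)]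
      image_Int[OF inj_bit_xor] gen_overlap_def Int_ac)

theorem lemma2p8:
  fixes n :: nat and X Y Z :: "nat \<Rightarrow> bool"
  assumes "n \<ge> 5"
    and "X \<in> AQ_verts n" and "Y \<in> AQ_verts n" and "Z \<in> AQ_verts n"
    and "Y \<noteq> Z" and "AQ_adj n X Y" and "AQ_adj n X Z"
  shows "card (AQ_nbr_set n {Y, X, Z}) \<ge> 6 * n - 17
    \<and> card (AQ_nbr n X \<inter> AQ_nbr n Y \<inter> AQ_nbr n Z) \<le> 1
    \<and> (Z = flip_upto X n \<longrightarrow> card (AQ_nbr_set n {Y, X, Z}) \<ge> 6 * n - 15)"
proof -
  have "Y \<in> AQ_nbr n X" "Z \<in> AQ_nbr n X"
    using assms(6,7) by (simp_all add: AQ_nbr_def)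
  then obtain s t where s: "s \<in> AQ_gens n" "Y = X \<oplus> s" and t: "t \<in> AQ_gens n" "Z = X \<oplus> t"
    unfolding AQ_nbr_eq_bit_xor_image[OF assms(2)] by blast
  have st: "s \<noteq> t"
    using s t \<open>Y \<noteq> Z\<close> by auto
  have "6 * n \<le> card (AQ_nbr_set n {Y, X, Z}) + (if t = prefix_vec n then 15 else 17)"
    using card_gen_path_nbhd_ge[OF s(1) t(1) st] AQ_path_nbhd_eq[of X n s t] assms(2-4) s t
    by (simp add: card_bit_xor_image)
  moreover have "card (AQ_nbr n X \<inter> AQ_nbr n Y \<inter> AQ_nbr n Z) \<le> 1"
    using card_gen_overlap_Int_le[OF s(1) t(1) st] AQ_path_common_nbrs_eq[of X n s t] assms(2-4) s t
    by (simp add: card_bit_xor_image)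
  moreover have "Z = flip_upto X n \<Longrightarrow> t = prefix_vec n"
    using t by (simp add: flip_upto_eq_bit_xor)
  ultimately show ?thesis
    by (auto split: if_splits)
qed

end
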